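(* Let $G$ be a compact vector space over $\mathbb{F}_2$, $V\le\widehat G$ a finite subgroup, and $A\subset G$ measurable of density $\alpha$. Then \[ \|f_V\|_1\ \ge\ 2|V|^{-1}\{\alpha|V|\}\bigl(1-\{\alpha|V|\}\bigr). \]
   Context: $G$ is a compact Hausdorff abelian group with $x+x=0$ for all $x$; $\widehat G$ its dual, a discrete $\mathbb{F}_2$-vector space; $\mu_G$ Haar probability measure; density of $A$ is $\mu_G(A)$; $\widehat f(\gamma)=\int_G f\overline\gamma\,d\mu_G$. For finite $V\le\widehat G$, $V^\perp=\{x:\gamma(x)=1\ \forall\gamma\in V\}$, $\mu_{V^\perp}$ is Haar probability measure on $V^\perp$, and $f_V\in L^2(G)$ is defined by $\widehat{f_V}(\gamma)=0$ for $\gamma\in V$, $\widehat{f_V}(\gamma)=\widehat{\chi_A}(\gamma)$ otherwise; equivalently $f_V=\chi_A-\chi_A*\mu_{V^\perp}$ a.e. $\|\cdot\|_1$ is the $L^1(\mu_G)$ norm and $\{t\}$ the fractional part of $t$. *)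

theory Defs
  imports "HOL-Probability.Probability"
begin

text \<open>A compact vector space over F_2: a compact Hausdorff abelian topological group
  in which x + x = 0 (so negation is the identity and continuity of addition suffices).\<close>
definition compact_F2_space :: "('a::{ab_group_add,t2_space}) itself \<Rightarrow> bool" where
  "compact_F2_space _ \<longleftrightarrow> compact (UNIV :: 'a set)
     \<and> continuous_on UNIV (\<lambda>p::'a \<times> 'a. fst p + snd p)
     \<and> (\<forall>x::'a. x + x = 0)"

definition haar_prob :: "('a::{ab_group_add,topological_space}) measure \<Rightarrow> bool" where
  "haar_prob M \<longleftrightarrow> prob_space M \<and> space M = UNIV \<and> sets borel \<subseteq> sets M
     \<and> (\<forall>x B. B \<in> sets M \<longrightarrow> (\<lambda>y. x + y) ` B \<in> sets M
                 \<and> emeasure M ((\<lambda>y. x + y) ` B) = emeasure M B)"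

definition character :: "('a::{ab_group_add,topological_space} \<Rightarrow> complex) \<Rightarrow> bool" where
  "character \<gamma> \<longleftrightarrow> continuous_on UNIV \<gamma> \<and> (\<forall>x y. \<gamma> (x + y) = \<gamma> x * \<gamma> y)
     \<and> (\<forall>x. cmod (\<gamma> x) = 1)"

definition finite_dual_subgroup :: "('a::{ab_group_add,topological_space} \<Rightarrow> complex) set \<Rightarrow> bool" where
  "finite_dual_subgroup V \<longleftrightarrow> finite V \<and> (\<forall>\<gamma>\<in>V. character \<gamma>) \<and> (\<lambda>_. 1) \<in> V
     \<and> (\<forall>\<gamma>\<in>V. \<forall>\<delta>\<in>V. (\<lambda>x. \<gamma> x * \<delta> x) \<in> V)
     \<and> (\<forall>\<gamma>\<in>V. (\<lambda>x. inverse (\<gamma> x)) \<in> V)"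

definition annihilator :: "('a \<Rightarrow> complex) set \<Rightarrow> 'a set" where
  "annihilator V = {x. \<forall>\<gamma>\<in>V. \<gamma> x = 1}"

text \<open>Haar probability measure of the closed subgroup V^perp, viewed as a measure on G
  (the normalised restriction of mu_G to V^perp).\<close>
definition haar_perp :: "'a measure \<Rightarrow> ('a \<Rightarrow> complex) set \<Rightarrow> 'a measure" where
  "haar_perp M V = uniform_measure M (annihilator V)"

text \<open>f_V = chi_A - chi_A * mu_{V^perp}\<close>
definition fV :: "('a::ab_group_add) measure \<Rightarrow> ('a \<Rightarrow> complex) set \<Rightarrow> 'a set \<Rightarrow> 'a \<Rightarrow> real" where
  "fV M V A x = indicator A x - (\<integral>y. indicator A (x - y) \<partial>(haar_perp M V))"

end

theory Submission
  imports Defs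
begin

text \<open>
  Since every element of G has order 2, the characters in V take only the values 1 and -1, so the
  cosets of V^perp are the joint level sets of the characters in V. Orthogonality of characters
  (the sum over V is |V| times the indicator of V^perp, and every nontrivial character integrates
  to 0) shows that each coset has measure 1/|V|. Convolution with mu_{V^perp} replaces chi_A on a
  coset C by the relative density b_C of A in C, so the L^1 norm of f_V is
  (2/|V|) sum_C b_C (1 - b_C). Finally sum_C b_C = alpha |V| with every b_C in [0,1], and adding
  a number a in [0,1] to t increases {t}(1 - {t}) by at most a(1 - a).
\<close>

lemma frac_mult_one_minus_frac_add_le:
  fixes s a :: real
  assumes "0 \<le> a" "a \<le> 1"
  shows "frac (s + a) * (1 - frac (s + a)) \<le> frac s * (1 - frac s) + a * (1 - a)"
proof (cases "a = 1")
  case True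
  then show ?thesis using frac_add_of_int_right[of s 1] by simp
next
  case False
  with assms have frac_a: "frac a = a" by (simp add: frac_eq)
  have frac_s: "0 \<le> frac s" "frac s < 1" by (auto simp: frac_lt_1)
  show ?thesis
  proof (cases "frac s + a < 1")
    case True
    with frac_a have "frac (s + a) = frac s + a" by (simp add: frac_add)
    with frac_s assms show ?thesis by (simp add: algebra_simps)
  next
    case False
    with frac_a have frac_sum: "frac (s + a) = frac s + a - 1" by (simp add: frac_add)
    have "0 \<le> (1 - frac s) * (1 - a)" using frac_s assms by simp
    then show ?thesis unfolding frac_sum by (simp add: algebra_simps)
  qed
qed

lemma frac_mult_one_minus_frac_sum_le:
  fixes b :: "'i \<Rightarrow> real"
  assumes "finite S" "\<And>s. s \<in> S \<Longrightarrow> b s \<in> {0..1}"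
  shows "frac (\<Sum>s\<in>S. b s) * (1 - frac (\<Sum>s\<in>S. b s)) \<le> (\<Sum>s\<in>S. b s * (1 - b s))"
  using assms
proof (induction S rule: finite_induct)
  case empty
  then show ?case by simp
next
  case (insert s S)
  have "frac (\<Sum>s\<in>insert s S. b s) * (1 - frac (\<Sum>s\<in>insert s S. b s))
      \<le> frac (\<Sum>s\<in>S. b s) * (1 - frac (\<Sum>s\<in>S. b s)) + b s * (1 - b s)"
    using insert frac_mult_one_minus_frac_add_le[of "b s" "\<Sum>s\<in>S. b s"] by (simp add: add.commute)
  also have "\<dots> \<le> (\<Sum>s\<in>S. b s * (1 - b s)) + b s * (1 - b s)"
    using insert by simp
  finally show ?case using insert by simp
qed

context
  fixes M :: "'a measure" and P :: "'a set set" and c :: real and A :: "'a set" and f :: "'a \<Rightarrow> real"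
  assumes finite_measure: "finite_measure M"
    and partition: "partition_on (space M) P" "finite P" "P \<subseteq> sets M"
    and measure_block: "\<And>C. C \<in> P \<Longrightarrow> measure M C = c"
    and c_pos: "c > 0"
    and A: "A \<in> sets M"
    and f: "\<And>C x. C \<in> P \<Longrightarrow> x \<in> C \<Longrightarrow> f x = indicator A x - measure M (A \<inter> C) / c"
begin

lemma block_density_bounds: "C \<in> P \<Longrightarrow> measure M (A \<inter> C) / c \<in> {0..1}"
proof -
  assume C: "C \<in> P"
  interpret finite_measure M by (rule finite_measure)
  have "measure M (A \<inter> C) \<le> measure M C"
    using C partition(3) by (intro finite_measure_mono) auto
  with C measure_block c_pos show ?thesis by simp
qed

lemma integral_abs_deviation_from_block_density:
  "(\<integral>x. \<bar>f x\<bar> \<partial>M) = 2 * c * (\<Sum>C\<in>P. measure M (A \<inter> C) / c * (1 - measure M (A \<inter> C) / c))"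
proof -
  interpret finite_measure M by (rule finite_measure)
  define b where "b C = measure M (A \<inter> C) / c" for C
  define g where "g C = (\<lambda>x. (1 - b C) * indicator (A \<inter> C) x + b C * indicator (C - A) x)" for C
  have pieces: "A \<inter> C \<in> sets M" "C - A \<in> sets M" if "C \<in> P" for C
    using that partition(3) A by auto
  have integrable_g: "integrable M (g C)" if "C \<in> P" for C
    using pieces[OF that] by (auto simp: g_def less_top[symmetric])
  have abs_f_eq: "\<bar>f x\<bar> = (\<Sum>C\<in>P. g C x)" if x: "x \<in> space M" for x
  proof -
    obtain C where C: "C \<in> P" "x \<in> C"
      using x partition_onD1[OF partition(1)] by auto
    have "x \<notin> D" if "D \<in> P - {C}" for D
      using that C partition_onD2[OF partition(1)] by (auto simp: disjoint_def)
    then have "(\<Sum>D\<in>P. g D x) = g C x"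
      using C by (simp add: sum.remove[OF partition(2) C(1)] g_def)
    also have "\<dots> = \<bar>f x\<bar>"
      using C c_pos block_density_bounds[OF C(1)] by (auto simp: g_def b_def f indicator_def)
    finally show ?thesis by simp
  qed
  have integral_g: "(\<integral>x. g C x \<partial>M) = 2 * c * (b C * (1 - b C))" if C: "C \<in> P" for C
  proof -
    have "(\<integral>x. g C x \<partial>M) = (1 - b C) * measure M (A \<inter> C) + b C * measure M (C - A)"
      unfolding g_def using pieces[OF C]
      by (subst Bochner_Integration.integral_add) (auto simp: less_top[symmetric] sets.Int_space_eq2)
    also have "measure M (C - A) = c - measure M (A \<inter> C)"
      using finite_measure_Diff'[OF subsetD[OF partition(3) C] A] measure_block[OF C] by (simp add: Int_commute)
    also have "measure M (A \<inter> C) = c * b C"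
      using c_pos by (simp add: b_def)
    finally show ?thesis by (simp add: algebra_simps)
  qed
  have "(\<integral>x. \<bar>f x\<bar> \<partial>M) = (\<integral>x. (\<Sum>C\<in>P. g C x) \<partial>M)"
    by (intro Bochner_Integration.integral_cong) (simp_all add: abs_f_eq)
  also have "\<dots> = (\<Sum>C\<in>P. \<integral>x. g C x \<partial>M)"
    using integrable_g by (rule Bochner_Integration.integral_sum)
  also have "\<dots> = 2 * c * (\<Sum>C\<in>P. b C * (1 - b C))"
    by (simp add: integral_g sum_distrib_left)
  finally show ?thesis by (simp add: b_def)
qed

lemma integral_abs_deviation_from_block_density_ge:
  "(\<integral>x. \<bar>f x\<bar> \<partial>M) \<ge> 2 * c * frac (measure M A / c) * (1 - frac (measure M A / c))"
proof -
  interpret finite_measure M by (rule finite_measure)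
  have "measure M A = measure M (\<Union>C\<in>P. A \<inter> C)"
    using partition_onD1[OF partition(1)] sets.sets_into_space[OF A]
    by (intro arg_cong[where f="measure M"]) auto
  also have "\<dots> = (\<Sum>C\<in>P. measure M (A \<inter> C))"
    using partition A partition_onD2[OF partition(1)]
    by (intro measure_finite_Union) (auto simp: disjoint_family_on_def disjoint_def)
  finally have sum_densities: "measure M A / c = (\<Sum>C\<in>P. measure M (A \<inter> C) / c)"
    by (simp add: sum_divide_distrib)
  have "frac (measure M A / c) * (1 - frac (measure M A / c))
      \<le> (\<Sum>C\<in>P. measure M (A \<inter> C) / c * (1 - measure M (A \<inter> C) / c))"
    unfolding sum_densities
    using partition(2) block_density_bounds by (rule frac_mult_one_minus_frac_sum_le)
  with c_pos show ?thesis
    unfolding integral_abs_deviation_from_block_density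
    by (simp add: mult.assoc mult_left_mono)
qed

end

lemma vimage_translation:
  fixes x :: "'a::ab_group_add"
  shows "(\<lambda>y. x + y) -` B = (\<lambda>y. - x + y) ` B"
  by (force simp: algebra_simps)

lemma haar_prob_measurable:
  assumes "haar_prob M" "f \<in> measurable borel N"
  shows "f \<in> measurable M N"
  using assms unfolding haar_prob_def measurable_def by auto

lemma haar_prob_translation_in_sets:
  assumes "haar_prob M" "B \<in> sets M"
  shows "(\<lambda>y. x + y) ` B \<in> sets M"
  using assms unfolding haar_prob_def by blast

lemma haar_prob_measure_translation:
  assumes "haar_prob M" "B \<in> sets M"
  shows "measure M ((\<lambda>y. x + y) ` B) = measure M B"
  using assms unfolding haar_prob_def measure_def by metis

lemma haar_prob_vimage_translation:
  assumes "haar_prob M" "B \<in> sets M"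
  shows "(\<lambda>y. x + y) -` B \<in> sets M" "emeasure M ((\<lambda>y. x + y) -` B) = emeasure M B"
  using assms unfolding haar_prob_def vimage_translation by blast+

lemma haar_prob_measurable_translation:
  assumes "haar_prob M"
  shows "(\<lambda>y. x + y) \<in> M \<rightarrow>\<^sub>M M"
  using assms haar_prob_vimage_translation[OF assms]
  by (intro measurableI) (auto simp: haar_prob_def)

lemma haar_prob_distr_translation:
  assumes "haar_prob M"
  shows "distr M M (\<lambda>y. x + y) = M"
  using assms haar_prob_vimage_translation[OF assms]
  by (intro measure_eqI) (auto simp: emeasure_distr haar_prob_measurable_translation haar_prob_def)

lemma character_nonzero: "character \<gamma> \<Longrightarrow> \<gamma> x \<noteq> 0"
  unfolding character_def by (metis norm_zero zero_neq_one)

lemma character_zero: "character \<gamma> \<Longrightarrow> \<gamma> 0 = 1"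
  using character_nonzero[of \<gamma> 0] unfolding character_def
  by (metis add_0 mult_cancel_right1)

lemma character_borel_measurable:
  assumes "haar_prob M" "character \<gamma>"
  shows "\<gamma> \<in> borel_measurable M"
  using assms(2) unfolding character_def
  by (intro haar_prob_measurable[OF assms(1)] borel_measurable_continuous_onI) blast

lemma integral_character:
  assumes M: "haar_prob M" and \<gamma>: "character \<gamma>"
  shows "(\<integral>x. \<gamma> x \<partial>M) = (if \<gamma> = (\<lambda>_. 1) then 1 else 0)"
proof (cases "\<gamma> = (\<lambda>_. 1)")
  case True
  with M prob_space.prob_space[of M] show ?thesis by (simp add: haar_prob_def)
next
  case False
  then obtain x where x: "\<gamma> x \<noteq> 1" by auto
  have "(\<integral>y. \<gamma> y \<partial>M) = (\<integral>y. \<gamma> y \<partial>distr M M (\<lambda>y. x + y))"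
    by (simp add: haar_prob_distr_translation[OF M])
  also have "\<dots> = (\<integral>y. \<gamma> (x + y) \<partial>M)"
    by (rule integral_distr[OF haar_prob_measurable_translation[OF M] character_borel_measurable[OF M \<gamma>]])
  also have "\<dots> = \<gamma> x * (\<integral>y. \<gamma> y \<partial>M)"
    using \<gamma> by (simp add: character_def)
  finally have "(1 - \<gamma> x) * (\<integral>y. \<gamma> y \<partial>M) = 0"
    by (simp add: algebra_simps)
  with x False show ?thesis by simp
qed

lemma integrable_character:
  assumes M: "haar_prob M" and \<gamma>: "character \<gamma>"
  shows "integrable M \<gamma>"
proof -
  interpret prob_space M using M by (simp add: haar_prob_def)
  show ?thesis
    using \<gamma> character_borel_measurable[OF M \<gamma>]
    by (intro integrable_const_bound[where B = 1]) (auto simp: character_def)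
qed

lemma sum_finite_dual_subgroup:
  assumes V: "finite_dual_subgroup V"
  shows "(\<Sum>\<gamma>\<in>V. \<gamma> x) = (if x \<in> annihilator V then of_nat (card V) else 0)"
proof (cases "x \<in> annihilator V")
  case True
  then have "(\<Sum>\<gamma>\<in>V. \<gamma> x) = (\<Sum>\<gamma>\<in>V. 1)"
    by (intro sum.cong) (auto simp: annihilator_def)
  with True show ?thesis by simp
next
  case False
  then obtain \<delta> where \<delta>: "\<delta> \<in> V" "\<delta> x \<noteq> 1"
    unfolding annihilator_def by auto
  have \<delta>_nonzero: "\<delta> y \<noteq> 0" for y
    using V \<delta>(1) character_nonzero unfolding finite_dual_subgroup_def by blast
  have "bij_betw (\<lambda>\<gamma> y. \<delta> y * \<gamma> y) V V"
  proof (rule bij_betw_byWitness[where f' = "\<lambda>\<gamma> y. inverse (\<delta> y) * \<gamma> y"])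
    show "(\<lambda>\<gamma> y. \<delta> y * \<gamma> y) ` V \<subseteq> V" "(\<lambda>\<gamma> y. inverse (\<delta> y) * \<gamma> y) ` V \<subseteq> V"
      using V \<delta>(1) unfolding finite_dual_subgroup_def by auto
  qed (auto simp: fun_eq_iff \<delta>_nonzero)
  then have "(\<Sum>\<gamma>\<in>V. \<gamma> x) = (\<Sum>\<gamma>\<in>V. \<delta> x * \<gamma> x)"
    by (rule sum.reindex_bij_betw[symmetric, where g = "\<lambda>\<gamma>. \<gamma> x"])
  also have "\<dots> = \<delta> x * (\<Sum>\<gamma>\<in>V. \<gamma> x)"
    by (simp add: sum_distrib_left)
  finally have "(1 - \<delta> x) * (\<Sum>\<gamma>\<in>V. \<gamma> x) = 0"
    by (simp add: algebra_simps)
  with False \<delta>(2) show ?thesis by simp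
qed

lemma annihilator_in_sets:
  assumes "haar_prob M" "finite_dual_subgroup V"
  shows "annihilator V \<in> sets M"
proof -
  have "annihilator V = (\<Inter>\<gamma>\<in>V. \<gamma> -` {1} \<inter> space M)"
    using assms unfolding annihilator_def haar_prob_def finite_dual_subgroup_def by auto
  also have "\<dots> \<in> sets M"
    using assms character_borel_measurable unfolding finite_dual_subgroup_def
    by (intro sets.finite_INT measurable_sets) auto
  finally show ?thesis .
qed

lemma measure_annihilator:
  assumes M: "haar_prob M" and V: "finite_dual_subgroup V"
  shows "measure M (annihilator V) = 1 / card V"
proof -
  have characters: "\<And>\<gamma>. \<gamma> \<in> V \<Longrightarrow> character \<gamma>" "finite V" "(\<lambda>_. 1) \<in> V"
    using V unfolding finite_dual_subgroup_def by auto
  have "complex_of_real (card V * measure M (annihilator V))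
      = (\<integral>x. complex_of_real (real (card V) * indicator (annihilator V) x) \<partial>M)"
    using annihilator_in_sets[OF M V] M
    by (subst integral_complex_of_real) (simp add: haar_prob_def)
  also have "\<dots> = (\<integral>x. (\<Sum>\<gamma>\<in>V. \<gamma> x) \<partial>M)"
    by (intro Bochner_Integration.integral_cong) (simp_all add: sum_finite_dual_subgroup[OF V])
  also have "\<dots> = (\<Sum>\<gamma>\<in>V. \<integral>x. \<gamma> x \<partial>M)"
    using characters integrable_character[OF M] by (intro Bochner_Integration.integral_sum) auto
  also have "\<dots> = 1"
    using characters by (simp add: integral_character[OF M] sum.delta')
  finally have "card V * measure M (annihilator V) = 1"
    by (metis of_real_eq_1_iff)
  moreover have "card V > 0"
    using characters card_gt_0_iff by blast
  ultimately show ?thesis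
    by (simp add: field_simps)
qed

lemma add_add_cancel_boolean:
  fixes x y :: "'a::ab_group_add"
  assumes "\<And>x::'a. x + x = 0"
  shows "x + (x + y) = y"
  by (metis add.assoc add_0 assms)

lemma character_mult_self:
  fixes \<gamma> :: "'a::{ab_group_add,topological_space} \<Rightarrow> complex"
  assumes "\<And>x::'a. x + x = 0" "character \<gamma>"
  shows "\<gamma> x * \<gamma> x = 1"
  using assms character_zero[OF assms(2)] unfolding character_def by metis

definition perp_coset :: "('a::plus \<Rightarrow> complex) set \<Rightarrow> 'a \<Rightarrow> 'a set" where
  "perp_coset V x = (\<lambda>h. x + h) ` annihilator V"

lemma perp_coset_eq_level_set:
  fixes V :: "('a::{ab_group_add,topological_space} \<Rightarrow> complex) set"
  assumes boolean: "\<And>x::'a. x + x = 0" and characters: "\<And>\<gamma>. \<gamma> \<in> V \<Longrightarrow> character \<gamma>"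
  shows "perp_coset V x = {y. \<forall>\<gamma>\<in>V. \<gamma> y = \<gamma> x}"
proof -
  note cancel = add_add_cancel_boolean[OF boolean, of x]
  have "y \<in> perp_coset V x \<longleftrightarrow> x + y \<in> annihilator V" for y
  proof
    assume "y \<in> perp_coset V x"
    then obtain h where "h \<in> annihilator V" "y = x + h"
      unfolding perp_coset_def by blast
    then show "x + y \<in> annihilator V"
      by (simp add: cancel)
  next
    assume "x + y \<in> annihilator V"
    with cancel[of y] show "y \<in> perp_coset V x"
      unfolding perp_coset_def by (metis image_eqI)
  qed
  moreover have "\<gamma> (x + y) = 1 \<longleftrightarrow> \<gamma> y = \<gamma> x" if "\<gamma> \<in> V" for \<gamma> y
  proof -
    have hom: "\<gamma> (x + y) = \<gamma> x * \<gamma> y"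
      using characters[OF that] unfolding character_def by blast
    from character_mult_self[OF boolean characters[OF that]]
    consider "\<gamma> x = 1" | "\<gamma> x = -1"
      unfolding square_eq_1_iff by blast
    then show ?thesis
      by cases (auto simp: hom minus_equation_iff)
  qed
  ultimately show ?thesis
    unfolding annihilator_def by auto
qed

lemma perp_coset_eqI:
  fixes V :: "('a::{ab_group_add,topological_space} \<Rightarrow> complex) set"
  assumes "\<And>x::'a. x + x = 0" "\<And>\<gamma>. \<gamma> \<in> V \<Longrightarrow> character \<gamma>" "y \<in> perp_coset V x"
  shows "perp_coset V y = perp_coset V x"
  using assms by (auto simp: perp_coset_eq_level_set)

lemma partition_on_perp_cosets:
  fixes V :: "('a::{ab_group_add,topological_space} \<Rightarrow> complex) set"
  assumes "\<And>x::'a. x + x = 0" "\<And>\<gamma>. \<gamma> \<in> V \<Longrightarrow> character \<gamma>"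
  shows "partition_on UNIV (range (perp_coset V))"
  unfolding partition_on_def disjoint_def by (auto simp: perp_coset_eq_level_set[OF assms]) metis+

lemma finite_perp_cosets:
  fixes V :: "('a::{ab_group_add,topological_space} \<Rightarrow> complex) set"
  assumes boolean: "\<And>x::'a. x + x = 0" and V: "finite_dual_subgroup V"
  shows "finite (range (perp_coset V))"
proof -
  have characters: "\<And>\<gamma>. \<gamma> \<in> V \<Longrightarrow> character \<gamma>" and "finite V"
    using V unfolding finite_dual_subgroup_def by auto
  have "perp_coset V x = (\<lambda>s. {y. \<forall>\<gamma>\<in>V. \<gamma> y = s \<gamma>}) (restrict (\<lambda>\<gamma>. \<gamma> x) V)" for x
    using boolean characters by (simp add: perp_coset_eq_level_set)
  moreover have "restrict (\<lambda>\<gamma>. \<gamma> x) V \<in> V \<rightarrow>\<^sub>E {1, -1}" for x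
    using character_mult_self[OF boolean characters] by (simp add: square_eq_1_iff)
  ultimately have "range (perp_coset V) \<subseteq> (\<lambda>s. {y. \<forall>\<gamma>\<in>V. \<gamma> y = s \<gamma>}) ` (V \<rightarrow>\<^sub>E {1, -1})"
    by blast
  then show ?thesis
    by (rule finite_subset) (use \<open>finite V\<close> in \<open>auto intro: finite_PiE\<close>)
qed

lemma perp_coset_in_sets:
  assumes "haar_prob M" "finite_dual_subgroup V"
  shows "perp_coset V x \<in> sets M"
  unfolding perp_coset_def using assms by (intro haar_prob_translation_in_sets annihilator_in_sets)

lemma measure_perp_coset:
  assumes "haar_prob M" "finite_dual_subgroup V"
  shows "measure M (perp_coset V x) = 1 / card V"
  unfolding perp_coset_def using assms
  by (simp add: haar_prob_measure_translation annihilator_in_sets measure_annihilator)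

lemma fV_eq_perp_coset:
  fixes M :: "('a::{ab_group_add,topological_space}) measure"
  assumes boolean: "\<And>x::'a. x + x = 0" and M: "haar_prob M" and V: "finite_dual_subgroup V"
    and A: "A \<in> sets M"
  shows "fV M V A x = indicator A x - measure M (A \<inter> perp_coset V x) * card V"
proof -
  define H where "H = annihilator V"
  have space: "space M = UNIV" and "prob_space M"
    using M by (auto simp: haar_prob_def)
  interpret prob_space M by fact
  have H: "H \<in> sets M" "measure M H = 1 / card V" "card V > 0"
    using annihilator_in_sets[OF M V] measure_annihilator[OF M V] V
    by (auto simp: H_def finite_dual_subgroup_def card_gt_0_iff)
  then have H_emeasure: "emeasure M H \<noteq> 0" "emeasure M H \<noteq> \<infinity>"
    by (simp_all add: emeasure_eq_measure)
  note cancel = add_add_cancel_boolean[OF boolean, of x]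
  have translate_A: "(\<lambda>y. x + y) -` A \<in> sets M"
    using haar_prob_vimage_translation(1)[OF M A] .
  have "(\<integral>y. indicator A (x - y) \<partial>haar_perp M V)
      = (\<integral>y. indicator ((\<lambda>y. x + y) -` A) y \<partial>uniform_measure M H)"
    unfolding haar_perp_def H_def
    by (simp add: diff_conv_add_uminus minus_unique[OF boolean] indicator_def)
  also have "\<dots> = measure M (H \<inter> (\<lambda>y. x + y) -` A) / measure M H"
    using H H_emeasure translate_A by (simp add: space)
  also have "H \<inter> (\<lambda>y. x + y) -` A = (\<lambda>y. x + y) ` (A \<inter> perp_coset V x)"
  proof (intro equalityI subsetI)
    fix y
    assume "y \<in> H \<inter> (\<lambda>y. x + y) -` A"
    then have "x + y \<in> A \<inter> perp_coset V x"
      unfolding perp_coset_def H_def by auto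
    with cancel[of y] show "y \<in> (\<lambda>y. x + y) ` (A \<inter> perp_coset V x)"
      by (metis image_eqI)
  next
    fix y
    assume "y \<in> (\<lambda>y. x + y) ` (A \<inter> perp_coset V x)"
    then show "y \<in> H \<inter> (\<lambda>y. x + y) -` A"
      unfolding perp_coset_def H_def by (auto simp: cancel)
  qed
  also have "measure M \<dots> = measure M (A \<inter> perp_coset V x)"
    using A perp_coset_in_sets[OF M V] by (intro haar_prob_measure_translation[OF M]) auto
  finally show ?thesis
    unfolding fV_def using H by simp
qed

theorem lemma5p1:
  fixes M :: "('a::{ab_group_add,t2_space}) measure"
    and V :: "('a \<Rightarrow> complex) set"
    and A :: "'a set"
  assumes "compact_F2_space TYPE('a)"
    and "haar_prob M"
    and "finite_dual_subgroup V"
    and "A \<in> sets M"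
  shows "(\<integral>x. \<bar>fV M V A x\<bar> \<partial>M) \<ge>
           2 / real (card V) * frac (measure M A * real (card V))
             * (1 - frac (measure M A * real (card V)))"
proof -
  have boolean: "\<And>x::'a. x + x = 0"
    using assms(1) unfolding compact_F2_space_def by blast
  have characters: "\<And>\<gamma>. \<gamma> \<in> V \<Longrightarrow> character \<gamma>" and "card V > 0"
    using assms(3) unfolding finite_dual_subgroup_def by (auto simp: card_gt_0_iff)
  have M: "finite_measure M" "space M = UNIV"
    using assms(2) by (auto simp: haar_prob_def prob_space.finite_measure)
  have "2 * (1 / card V) * frac (measure M A / (1 / card V)) * (1 - frac (measure M A / (1 / card V)))
      \<le> (\<integral>x. \<bar>fV M V A x\<bar> \<partial>M)"
  proof (rule integral_abs_deviation_from_block_density_ge[OF M(1)])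
    show "partition_on (space M) (range (perp_coset V))"
      using partition_on_perp_cosets[OF boolean characters] M(2) by simp
    show "finite (range (perp_coset V))"
      using finite_perp_cosets[OF boolean assms(3)] .
    show "range (perp_coset V) \<subseteq> sets M"
      using perp_coset_in_sets[OF assms(2,3)] by auto
    show "measure M C = 1 / card V" if "C \<in> range (perp_coset V)" for C
      using that measure_perp_coset[OF assms(2,3)] by auto
    show "fV M V A x = indicator A x - measure M (A \<inter> C) / (1 / card V)"
      if C: "C \<in> range (perp_coset V)" and x: "x \<in> C" for C x
    proof -
      from C obtain z where "C = perp_coset V z"
        by blast
      with x have "perp_coset V x = C"
        using perp_coset_eqI[OF boolean characters] by simp
      then show ?thesis
        using fV_eq_perp_coset[OF boolean assms(2,3,4)] by simp
    qed
  qed (use \<open>card V > 0\<close> assms(4) in auto)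
  then show ?thesis
    by simp
qed

end
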